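(* For $q\ge1$, let a $q$-prime factor be a word $0^a1^b$ with $b\ge0$ and $a=\lfloor b/q\rfloor+1$. The bivariate generating function $S_q(x,y)=\sum_{n,k\ge0}s_{n,k}x^ny^k$, where $s_{n,k}$ is the number of $q$-prime factors of length $n$ having exactly $k$ letters $1$, is $$S_q(x,y)=\frac{x\left(1-(xy)^q\right)}{(xy-1)(x^{q+1}y^q-1)}.$$
   Context: Exponents denote repetition of letters: $0^a1^b$ is $a$ zeros followed by $b$ ones. *)

theory Defs
  imports "HOL-Computational_Algebra.Formal_Power_Series"
begin

text \<open>Words over the alphabet {0,1} are lists of bool; False = letter 0, True = letter 1.\<close>

definition q_prime_factor :: "nat \<Rightarrow> bool list \<Rightarrow> bool" where
  "q_prime_factor q w \<longleftrightarrow>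
     (\<exists>a b. w = replicate a False @ replicate b True \<and> a = b div q + 1)"

definition num_ones :: "bool list \<Rightarrow> nat" where
  "num_ones w = length (filter (\<lambda>c. c) w)"

definition s_count :: "nat \<Rightarrow> nat \<Rightarrow> nat \<Rightarrow> nat" where
  "s_count q n k = card {w. q_prime_factor q w \<and> length w = n \<and> num_ones w = k}"

text \<open>Bivariate generating function as a power series in x whose coefficients are
  power series in y: coefficient of x^n y^k is s_count q n k.\<close>
definition S_gf :: "nat \<Rightarrow> rat fps fps" where
  "S_gf q = Abs_fps (\<lambda>n. Abs_fps (\<lambda>k. of_nat (s_count q n k)))"

definition X_var :: "rat fps fps" where "X_var = fps_X"
definition Y_var :: "rat fps fps" where "Y_var = fps_const fps_X"

end

theory Submission
  imports Defs
begin

unbundle fps_syntax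

text \<open>There is exactly one \<open>q\<close>-prime factor with \<open>k\<close> ones, of length \<open>k + \<lfloor>k/q\<rfloor> + 1\<close>,
  so \<open>S\<^sub>q = \<Sum>\<^sub>k x\<^bsup>k + \<lfloor>k/q\<rfloor> + 1\<^esup> y\<^bsup>k\<^esup>\<close>. Raising \<open>k\<close> by \<open>q\<close> raises the length by \<open>q + 1\<close>,
  so separating the terms with \<open>k < q\<close> gives
  \<open>S\<^sub>q = x (1 + xy + \<dots> + (xy)\<^bsup>q-1\<^esup>) + x\<^bsup>q+1\<^esup>y\<^bsup>q\<^esup> S\<^sub>q\<close>. Summing the geometric series and
  dividing by the denominator, whose constant coefficient is 1, yields the closed form.\<close>

definition prime_factor_length :: "nat \<Rightarrow> nat \<Rightarrow> nat" where
  "prime_factor_length q k = k + k div q + 1"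

lemma prime_factor_length_less: "k < q \<Longrightarrow> prime_factor_length q k = k + 1"
  by (simp add: prime_factor_length_def)

lemma prime_factor_length_ge:
  assumes "0 < q" and "q \<le> k"
  shows "prime_factor_length q k = prime_factor_length q (k - q) + (q + 1)"
proof -
  from assms have "k div q = (k - q) div q + 1"
    by (simp add: le_div_geq)
  with assms show ?thesis by (simp add: prime_factor_length_def)
qed

lemma s_count_eq: "s_count q n k = (if n = prime_factor_length q k then 1 else 0)"
proof -
  have "{w. q_prime_factor q w \<and> length w = n \<and> num_ones w = k} =
        (if n = prime_factor_length q k
         then {replicate (k div q + 1) False @ replicate k True} else {})"
    by (auto simp: q_prime_factor_def num_ones_def prime_factor_length_def filter_replicate)
  then show ?thesis by (simp add: s_count_def)
qed

lemma S_gf_nth: "S_gf q $ n $ k = (if n = prime_factor_length q k then 1 else 0)"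
  by (simp add: S_gf_def s_count_eq)

lemma X_var_Y_var_power_mult_nth:
  "(X_var ^ m * Y_var ^ j * F) $ n $ k =
     (if m \<le> n \<and> j \<le> k then F $ (n - m) $ (k - j) else 0)"
proof -
  have split: "X_var ^ m * Y_var ^ j * F = fps_X ^ m * (fps_const (fps_X ^ j) * F)"
    by (simp add: X_var_def Y_var_def fps_const_power mult.assoc)
  show ?thesis
    unfolding split by (simp add: fps_X_power_mult_nth)
qed

lemma X_var_Y_var_power_nth:
  "(X_var ^ m * Y_var ^ j) $ n $ k = (if n = m \<and> k = j then 1 else 0)"
  using X_var_Y_var_power_mult_nth[of m j 1 n k] by auto

lemma S_gf_rec:
  assumes "q \<ge> 1"
  shows "S_gf q = X_var * (\<Sum>r<q. (X_var * Y_var) ^ r) + X_var ^ (q + 1) * Y_var ^ q * S_gf q"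
proof (rule fps_ext, rule fps_ext)
  fix n k
  have "X_var * (\<Sum>r<q. (X_var * Y_var) ^ r) = (\<Sum>r<q. X_var ^ (r + 1) * Y_var ^ r)"
    by (simp add: sum_distrib_left power_mult_distrib mult.assoc)
  then have "(X_var * (\<Sum>r<q. (X_var * Y_var) ^ r)) $ n $ k =
             (\<Sum>r<q. (X_var ^ (r + 1) * Y_var ^ r) $ n $ k)"
    by (simp only: fps_sum_nth)
  also have "\<dots> = (\<Sum>r<q. if r = k then (if n = k + 1 then 1 else 0) else 0)"
    by (intro sum.cong) (simp_all only: X_var_Y_var_power_nth, auto)
  also have "\<dots> = (if k < q \<and> n = k + 1 then 1 else 0)"
    by simp
  finally have small: "(X_var * (\<Sum>r<q. (X_var * Y_var) ^ r)) $ n $ k =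
                       (if k < q \<and> n = k + 1 then 1 else 0)" .
  have "S_gf q $ n $ k = (if k < q \<and> n = k + 1 then 1 else 0) +
          (if q + 1 \<le> n \<and> q \<le> k then S_gf q $ (n - (q + 1)) $ (k - q) else 0)"
  proof (cases "k < q")
    case True
    then show ?thesis
      by (simp add: S_gf_nth prime_factor_length_less)
  next
    case False
    with assms show ?thesis
      by (auto simp: S_gf_nth prime_factor_length_ge)
  qed
  then show "S_gf q $ n $ k =
        (X_var * (\<Sum>r<q. (X_var * Y_var) ^ r) + X_var ^ (q + 1) * Y_var ^ q * S_gf q) $ n $ k"
    by (simp only: fps_add_nth small X_var_Y_var_power_mult_nth)
qed

lemma fps_mult_inverse_eq_1:
  fixes f :: "'a::{ring_1,inverse} fps"
  assumes "f $ 0 * inverse (f $ 0) = 1"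
  shows "f * inverse f = 1"
  using fps_right_inverse[OF assms] by (simp add: fps_inverse_def)

theorem lemma2:
  fixes q :: nat
  assumes "q \<ge> 1"
  shows "S_gf q =
    X_var * (1 - (X_var * Y_var) ^ q)
      * inverse ((X_var * Y_var - 1) * (X_var ^ (q + 1) * Y_var ^ q - 1))"
proof -
  define D where "D = (X_var * Y_var - 1) * (X_var ^ (q + 1) * Y_var ^ q - 1)"
  have "D * inverse D = 1"
    by (rule fps_mult_inverse_eq_1) (simp add: D_def X_var_def Y_var_def)
  have geometric: "(\<Sum>r<q. (X_var * Y_var) ^ r) * (1 - X_var * Y_var) = 1 - (X_var * Y_var) ^ q"
    using power_diff_1_eq[of "X_var * Y_var" q] by (simp add: algebra_simps)
  have solved: "S_gf q - X_var ^ (q + 1) * Y_var ^ q * S_gf q = X_var * (\<Sum>r<q. (X_var * Y_var) ^ r)"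
    using S_gf_rec[OF assms] by (simp only: diff_eq_eq)
  have "S_gf q * D = (S_gf q - X_var ^ (q + 1) * Y_var ^ q * S_gf q) * (1 - X_var * Y_var)"
    by (simp add: D_def algebra_simps)
  also have "\<dots> = X_var * ((\<Sum>r<q. (X_var * Y_var) ^ r) * (1 - X_var * Y_var))"
    unfolding solved by (simp only: mult.assoc)
  also have "\<dots> = X_var * (1 - (X_var * Y_var) ^ q)"
    by (simp only: geometric)
  finally have "S_gf q * D * inverse D = X_var * (1 - (X_var * Y_var) ^ q) * inverse D"
    by simp
  with \<open>D * inverse D = 1\<close> show ?thesis
    by (simp add: D_def mult.assoc)
qed

end
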